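(* Suppose Assumption (A) holds and, for sufficiently large $m$ and conditionally on the fitted function $\tilde\mu_m$, the joint density $b_m(x,u)$ of $(\mu(Z),\eta_m(Z))$ and its partial derivatives $\partial_xb_m(x,u)$, $\partial_x^2b_m(x,u)$ exist for all $x,u$, and there exist nonnegative functions $\bar b_{m,0},\bar b_{m,1},\bar b_{m,2}$ with \[ b_m(x,u)\le\bar b_{m,0}(u),\quad|\partial_xb_m(x,u)|\le\bar b_{m,1}(u),\quad|\partial_x^2b_m(x,u)|\le\bar b_{m,2}(u) \] for all $x,u$, and $B_{r,i}:=\sup_m\int_{\mathbb{R}}|u|^r\bar b_{m,i}(u)\,du<\infty$ for $r=0,1,2,3$ and $i=0,1,2$. Then for any sequence $\{x_m\}$ with $x_m\to x$ as $m\to\infty$, $f_{\tilde\mu_m}(x_m)\to f_\mu(x)$ and $f'_{\tilde\mu_m}(x_m)\to f'_\mu(x)$ almost surely as $m\to\infty$.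
   Context: Let $Z$ be a random vector with values in $\Omega\subseteq\mathbb{R}^d$ and distribution $P$; $\mu,\pi:\Omega\to\mathbb{R}$ measurable. For each $m$, $\tilde\mu_m,\tilde\pi_m:\Omega\to\mathbb{R}$ are random functions (fitted from a sample independent of $Z$); $\Pr_m$ is probability conditional on them, under which $Z\sim P$. $f_\mu$ is the density of $\mu(Z)$; $F_{\tilde\mu_m}(x)=\Pr_m\{\tilde\mu_m(Z)\le x\}$ and $f_{\tilde\mu_m}=\frac{d}{dx}F_{\tilde\mu_m}$. $\|g\|_\infty$ is the $P$-essential supremum of $|g|$ on $\Omega$. Assumption (A): there is a deterministic sequence $a_m\to0$ such that for sufficiently large $m$, $\|\tilde\mu_m-\mu\|_\infty=\mathcal{O}_{\rm P}(a_m)$ and $\|\tilde\pi_m-\pi\|_\infty=\mathcal{O}_{\rm P}(a_m)$. $\eta_m=a_m^{-1}(\tilde\mu_m-\mu)$. *)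

theory Defs
  imports "HOL-Probability.Probability"
begin

definition sup_norm :: "'a measure \<Rightarrow> ('a \<Rightarrow> real) \<Rightarrow> ereal" where
  "sup_norm P g = esssup P (\<lambda>z. ereal \<bar>g z\<bar>)"

text \<open>Stochastic boundedness X m = O_P(a m) w.r.t. the outer probability of M:
  for every eps > 0 there are K and m0 such that for all m >= m0 the event
  X m > K * a m is contained in a measurable event of probability at most eps.\<close>
definition bigO_P :: "'w measure \<Rightarrow> (nat \<Rightarrow> 'w \<Rightarrow> ereal) \<Rightarrow> (nat \<Rightarrow> real) \<Rightarrow> bool" where
  "bigO_P M X a \<longleftrightarrow>
     (\<forall>\<epsilon>>0. \<exists>K m0. \<forall>m\<ge>m0. \<exists>A\<in>sets M.
        {\<omega>\<in>space M. X m \<omega> > ereal (K * a m)} \<subseteq> A \<and> measure M A \<le> \<epsilon>)"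

definition cdf_of :: "'a measure \<Rightarrow> ('a \<Rightarrow> real) \<Rightarrow> real \<Rightarrow> real" where
  "cdf_of P g t = measure P {z \<in> space P. g z \<le> t}"

definition dens_of :: "'a measure \<Rightarrow> ('a \<Rightarrow> real) \<Rightarrow> real \<Rightarrow> real" where
  "dens_of P g = deriv (cdf_of P g)"

definition dens_deriv :: "'a measure \<Rightarrow> ('a \<Rightarrow> real) \<Rightarrow> real \<Rightarrow> real" where
  "dens_deriv P g = deriv (dens_of P g)"

end

theory Submission
  imports Defs
begin

text \<open>
  Write \<open>mut m = mu + a m * \<eta>\<^sub>m\<close>. If \<open>(X, V)\<close> has joint density \<open>b\<close>, then \<open>X + c * V\<close> has
  density \<open>t \<mapsto> \<integral> b (t - c * u, u) du\<close>, because the shear \<open>(s, u) \<mapsto> (s + c * u, u)\<close> preserves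
  Lebesgue measure; differentiating under the integral sign gives its derivative
  \<open>\<integral> \<partial>\<^sub>x b (t - c * u, u) du\<close>. By the mean value theorem and the bounds on \<open>\<partial>\<^sub>x b\<close> and
  \<open>\<partial>\<^sub>x\<^sup>2 b\<close>, both are Lipschitz in \<open>(c, t)\<close> with constant \<open>B\<close>: moving \<open>c\<close> costs
  \<open>\<integral> |u| b\<^sub>i(u) du\<close>, moving \<open>t\<close> costs \<open>\<integral> b\<^sub>i(u) du\<close>. The density of \<open>mu\<close> is the case
  \<open>c = 0\<close> of the same formula, so taking \<open>c = a m \<longrightarrow> 0\<close> and \<open>t = xs m \<longrightarrow> x\<close> proves the claim.
\<close>

lemma abs_diff_le_of_deriv_bound:
  fixes f f' :: "real \<Rightarrow> real"
  assumes "\<And>s. (f has_real_derivative f' s) (at s)" and "\<And>s. \<bar>f' s\<bar> \<le> C"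
  shows "\<bar>f y - f z\<bar> \<le> C * \<bar>y - z\<bar>"
  using field_differentiable_bound[of UNIV f f' C y z] assms by auto

lemma LIMSEQ_difference_quotient:
  fixes f :: "real \<Rightarrow> real"
  assumes "(f has_real_derivative D) (at t)" and "\<And>i. X i \<noteq> t" and "X \<longlonglongrightarrow> t"
  shows "(\<lambda>i. (f (X i) - f t) / (X i - t)) \<longlonglongrightarrow> D"
proof -
  have "((\<lambda>y. (f y - f t) / (y - t)) \<longlongrightarrow> D) (at t)"
    using assms(1) by (simp add: has_field_derivative_iff)
  then show ?thesis
    using assms(2,3) unfolding tendsto_at_iff_sequentially by (auto simp: o_def)
qed

lemma borel_measurable_partial_deriv:
  fixes f f' :: "real \<Rightarrow> real \<Rightarrow> real"
  assumes f: "(\<lambda>p. f (fst p) (snd p)) \<in> borel_measurable borel"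
    and deriv: "\<And>t u. ((\<lambda>s. f s u) has_real_derivative f' t u) (at t)"
  shows "(\<lambda>p. f' (fst p) (snd p)) \<in> borel_measurable borel"
proof (rule borel_measurable_LIMSEQ_real)
  fix p :: "real \<times> real"
  have "(\<lambda>i. fst p + 1 / Suc i) \<longlonglongrightarrow> fst p + 0"
    by (intro tendsto_intros LIMSEQ_inverse_real_of_nat[unfolded inverse_eq_divide])
  then have "(\<lambda>i. (f (fst p + 1 / Suc i) (snd p) - f (fst p) (snd p)) / (fst p + 1 / Suc i - fst p))
      \<longlonglongrightarrow> f' (fst p) (snd p)"
    by (intro LIMSEQ_difference_quotient[OF deriv]) auto
  then show "(\<lambda>i. (f (fst p + 1 / Suc i) (snd p) - f (fst p) (snd p)) * Suc i) \<longlonglongrightarrow> f' (fst p) (snd p)"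
    by simp
next
  fix i :: nat
  have "(\<lambda>p. (fst p + 1 / Suc i, snd p)) \<in> borel_measurable borel"
    by (intro borel_measurable_continuous_onI continuous_intros)
  from measurable_compose[OF this f]
  show "(\<lambda>p. (f (fst p + 1 / Suc i) (snd p) - f (fst p) (snd p)) * Suc i) \<in> borel_measurable borel"
    using f by simp
qed

lemma borel_measurable_uncurry_comp:
  fixes h :: "real \<Rightarrow> real \<Rightarrow> real"
  assumes "(\<lambda>p. h (fst p) (snd p)) \<in> borel_measurable borel"
    and "f \<in> borel_measurable M" and "g \<in> borel_measurable M"
  shows "(\<lambda>x. h (f x) (g x)) \<in> borel_measurable M"
  using measurable_compose[OF measurable_Pair[OF assms(2,3)], of "\<lambda>p. h (fst p) (snd p)"] assms(1)
  by (simp add: borel_prod)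

text \<open>The majorants \<open>g\<close> below need not be measurable (neither are the bounds \<open>bb\<close> of the
  theorem), so they may only enter through \<open>nn_integral_mono\<close>.\<close>

lemma nn_integral_abs_le_scaled_majorant:
  fixes f g :: "'a \<Rightarrow> real"
  assumes f: "f \<in> borel_measurable M" and le: "\<And>u. \<bar>f u\<bar> \<le> K * g u" and "0 \<le> K"
  shows "(\<integral>\<^sup>+u. ennreal \<bar>f u\<bar> \<partial>M) \<le> ennreal K * (\<integral>\<^sup>+u. ennreal (g u) \<partial>M)"
proof (cases "K = 0")
  case True
  then show ?thesis using le by (simp add: abs_le_zero_iff)
next
  case False
  with \<open>0 \<le> K\<close> have "0 < K" by simp
  \<comment> \<open>pull out \<open>K\<close> on the measurable side, where \<open>nn_integral_cmult\<close> applies\<close>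
  have "(\<integral>\<^sup>+u. ennreal \<bar>f u\<bar> \<partial>M) = (\<integral>\<^sup>+u. ennreal K * ennreal (\<bar>f u\<bar> / K) \<partial>M)"
    using \<open>0 < K\<close> by (intro nn_integral_cong) (simp add: ennreal_mult[symmetric])
  also have "\<dots> = ennreal K * (\<integral>\<^sup>+u. ennreal (\<bar>f u\<bar> / K) \<partial>M)"
    using f by (intro nn_integral_cmult) simp
  also have "\<dots> \<le> ennreal K * (\<integral>\<^sup>+u. ennreal (g u) \<partial>M)"
    using le \<open>0 < K\<close>
    by (intro mult_left_mono nn_integral_mono ennreal_leI) (auto simp: divide_le_eq mult.commute)
  finally show ?thesis .
qed

lemma integrable_of_nn_integral_majorant:
  fixes f g :: "'a \<Rightarrow> real"
  assumes "f \<in> borel_measurable M" and "\<And>u. \<bar>f u\<bar> \<le> g u" and "(\<integral>\<^sup>+u. ennreal (g u) \<partial>M) < \<infinity>"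
  shows "integrable M f"
proof (rule integrableI_bounded)
  show "(\<integral>\<^sup>+u. ennreal (norm (f u)) \<partial>M) < \<infinity>"
    using assms(2) by (intro le_less_trans[OF _ assms(3)] nn_integral_mono) (auto intro: ennreal_leI)
qed (use assms in auto)

lemma abs_integral_le_of_majorant:
  fixes f g :: "'a \<Rightarrow> real"
  assumes f: "f \<in> borel_measurable M" and le: "\<And>u. \<bar>f u\<bar> \<le> K * g u" and "0 \<le> K"
    and g: "(\<integral>\<^sup>+u. ennreal (g u) \<partial>M) \<le> ennreal C" and "0 \<le> C"
  shows "\<bar>integral\<^sup>L M f\<bar> \<le> K * C"
proof -
  have "(\<integral>\<^sup>+u. ennreal \<bar>f u\<bar> \<partial>M) \<le> ennreal K * ennreal C"
    using nn_integral_abs_le_scaled_majorant[OF f le \<open>0 \<le> K\<close>] g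
    by (meson mult_left_mono order_trans zero_le)
  then have bound: "(\<integral>\<^sup>+u. ennreal \<bar>f u\<bar> \<partial>M) \<le> ennreal (K * C)"
    using \<open>0 \<le> K\<close> \<open>0 \<le> C\<close> by (simp add: ennreal_mult)
  then have "integrable M f"
    using f by (intro integrableI_bounded) (auto simp: top.not_eq_extremum intro: le_less_trans)
  then have "ennreal \<bar>integral\<^sup>L M f\<bar> \<le> ennreal (K * C)"
    using integral_norm_bound_ennreal[of M f] bound by simp
  then show ?thesis
    using \<open>0 \<le> K\<close> \<open>0 \<le> C\<close> by (simp add: ennreal_le_iff)
qed

lemma dominated_convergence_nn_integral_majorant:
  fixes s :: "nat \<Rightarrow> 'a \<Rightarrow> real"
  assumes s: "\<And>i. s i \<in> borel_measurable M" and lim: "\<And>u. (\<lambda>i. s i u) \<longlonglongrightarrow> f u"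
    and le: "\<And>i u. \<bar>s i u\<bar> \<le> g u" and g: "(\<integral>\<^sup>+u. ennreal (g u) \<partial>M) < \<infinity>"
  shows "(\<lambda>i. integral\<^sup>L M (s i)) \<longlonglongrightarrow> integral\<^sup>L M f"
proof (rule integral_dominated_convergence)
  define w where "w u = (SUP i. \<bar>s i u\<bar>)" for u
  have bdd: "bdd_above (range (\<lambda>i. \<bar>s i u\<bar>))" for u
    using le by (intro bdd_aboveI2) auto
  have w_le: "\<bar>w u\<bar> \<le> g u" for u
  proof -
    have "0 \<le> w u"
      unfolding w_def using bdd by (intro cSUP_upper2[of _ _ 0]) auto
    moreover have "w u \<le> g u"
      unfolding w_def using le by (intro cSUP_least) auto
    ultimately show ?thesis by simp
  qed
  have "w \<in> borel_measurable M"
    unfolding w_def using s bdd by (intro borel_measurable_cSUP) auto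
  then show "integrable M w"
    using w_le g by (rule integrable_of_nn_integral_majorant)
  show "AE u in M. norm (s i u) \<le> w u" for i
    unfolding w_def using bdd by (intro AE_I2) (auto intro: cSUP_upper)
  show "f \<in> borel_measurable M"
    using lim s by (rule borel_measurable_LIMSEQ_real)
qed (use s lim in auto)

lemma has_real_derivative_integral:
  fixes k k' :: "real \<Rightarrow> real \<Rightarrow> real" and K :: "real \<Rightarrow> real"
  assumes int: "\<And>t. integrable lborel (k t)"
    and deriv: "\<And>t u. ((\<lambda>s. k s u) has_real_derivative k' t u) (at t)"
    and le: "\<And>t u. \<bar>k' t u\<bar> \<le> K u" and K: "(\<integral>\<^sup>+u. ennreal (K u) \<partial>lborel) < \<infinity>"
  shows "((\<lambda>t. \<integral>u. k t u \<partial>lborel) has_real_derivative (\<integral>u. k' t u \<partial>lborel)) (at t)"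
  unfolding has_field_derivative_iff tendsto_at_iff_sequentially
proof (intro allI impI)
  fix X :: "nat \<Rightarrow> real"
  assume X: "\<forall>i. X i \<in> UNIV - {t}" "X \<longlonglongrightarrow> t"
  define q where "q i u = (k (X i) u - k t u) / (X i - t)" for i u
  have "(\<lambda>i. integral\<^sup>L lborel (q i)) \<longlonglongrightarrow> (\<integral>u. k' t u \<partial>lborel)"
  proof (rule dominated_convergence_nn_integral_majorant[OF _ _ _ K])
    show "q i \<in> borel_measurable lborel" for i
      unfolding q_def using int[of "X i"] int[of t] by measurable
    show "(\<lambda>i. q i u) \<longlonglongrightarrow> k' t u" for u
      unfolding q_def using X by (intro LIMSEQ_difference_quotient[OF deriv]) auto
    show "\<bar>q i u\<bar> \<le> K u" for i u
    proof -
      have "\<bar>k (X i) u - k t u\<bar> \<le> K u * \<bar>X i - t\<bar>"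
        by (rule abs_diff_le_of_deriv_bound[OF deriv le])
      then show ?thesis
        using X(1) unfolding q_def by (simp add: abs_divide divide_le_eq)
    qed
  qed
  moreover have "integral\<^sup>L lborel (q i) = ((\<integral>u. k (X i) u \<partial>lborel) - (\<integral>u. k t u \<partial>lborel)) / (X i - t)" for i
    unfolding q_def using int by simp
  ultimately show "((\<lambda>y. ((\<integral>u. k y u \<partial>lborel) - (\<integral>u. k t u \<partial>lborel)) / (y - t)) \<circ> X)
      \<longlonglongrightarrow> (\<integral>u. k' t u \<partial>lborel)"
    by (simp add: o_def)
qed

lemma nn_integral_lborel_shear:
  fixes f :: "real \<times> real \<Rightarrow> ennreal"
  assumes f: "f \<in> borel_measurable borel"
  shows "(\<integral>\<^sup>+p. f p \<partial>lborel) = (\<integral>\<^sup>+y. \<integral>\<^sup>+u. f (y - c * u, u) \<partial>lborel \<partial>lborel)"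
proof -
  have "(\<integral>\<^sup>+p. f p \<partial>lborel) = (\<integral>\<^sup>+p. f p \<partial>(lborel \<Otimes>\<^sub>M lborel))"
    by (simp add: lborel_prod)
  also have "\<dots> = (\<integral>\<^sup>+u. \<integral>\<^sup>+s. f (s, u) \<partial>lborel \<partial>lborel)"
    using f by (intro lborel_pair.nn_integral_snd[symmetric]) (simp add: lborel_prod)
  also have "\<dots> = (\<integral>\<^sup>+u. \<integral>\<^sup>+y. f (y - c * u, u) \<partial>lborel \<partial>lborel)"
  proof (rule nn_integral_cong)
    fix u :: real
    have "(\<lambda>s. f (s, u)) \<in> borel_measurable borel"
      using f by measurable
    from nn_integral_real_affine[OF this, of 1 "- c * u"]
    show "(\<integral>\<^sup>+s. f (s, u) \<partial>lborel) = (\<integral>\<^sup>+y. f (y - c * u, u) \<partial>lborel)"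
      by simp
  qed
  also have "\<dots> = (\<integral>\<^sup>+y. \<integral>\<^sup>+u. f (y - c * u, u) \<partial>lborel \<partial>lborel)"
  proof (rule lborel_pair.Fubini')
    have "(\<lambda>p::real \<times> real. (fst p - c * snd p, snd p)) \<in> borel_measurable borel"
      by (intro borel_measurable_continuous_onI continuous_intros)
    from measurable_compose[OF this f]
    show "(\<lambda>(y, u). f (y - c * u, u)) \<in> borel_measurable (lborel \<Otimes>\<^sub>M lborel)"
      by (simp add: lborel_prod split_beta')
  qed
  finally show ?thesis .
qed

lemma has_real_derivative_nn_integral_atMost:
  fixes g :: "real \<Rightarrow> real"
  assumes cont: "continuous_on UNIV g" and nonneg: "\<And>y. 0 \<le> g y"
    and fin: "\<And>t. (\<integral>\<^sup>+y. ennreal (g y) * indicator {..t} y \<partial>lborel) < \<infinity>"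
  shows "((\<lambda>t. enn2real (\<integral>\<^sup>+y. ennreal (g y) * indicator {..t} y \<partial>lborel)) has_real_derivative g t) (at t)"
proof -
  define N where "N t = (\<integral>\<^sup>+y. ennreal (g y) * indicator {..t} y \<partial>lborel)" for t
  have split: "enn2real (N u) = enn2real (N s) + (LBINT y=s..u. g y)" if "s \<le> u" for s u
  proof -
    have g_meas: "g \<in> borel_measurable borel"
      using cont by (rule borel_measurable_continuous_onI)
    have "set_integrable lborel {s..u} g"
      by (rule borel_integrable_atLeastAtMost'[OF continuous_on_subset[OF cont]]) simp
    then have "set_integrable lborel {s<..u} g"
      by (rule set_integrable_subset) auto
    then have int: "integrable lborel (\<lambda>y. indicator {s<..u} y *\<^sub>R g y)"
      unfolding set_integrable_def .
    have "N u = (\<integral>\<^sup>+y. ennreal (g y) * indicator {..s} y + ennreal (indicator {s<..u} y *\<^sub>R g y) \<partial>lborel)"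
      unfolding N_def using that by (intro nn_integral_cong) (auto simp: indicator_def)
    also have "\<dots> = N s + ennreal (\<integral>y. indicator {s<..u} y *\<^sub>R g y \<partial>lborel)"
      unfolding N_def using g_meas int nonneg
      by (subst nn_integral_add) (auto intro!: nn_integral_eq_integral simp: indicator_def)
    finally have "N u = N s + ennreal (\<integral>y. indicator {s<..u} y *\<^sub>R g y \<partial>lborel)" .
    moreover have "0 \<le> (\<integral>y. indicator {s<..u} y *\<^sub>R g y \<partial>lborel)"
      using nonneg by (intro integral_nonneg_AE) (auto simp: indicator_def)
    moreover have "(\<integral>y. indicator {s<..u} y *\<^sub>R g y \<partial>lborel) = (LBINT y=s..u. g y)"
      using that by (simp add: interval_integral_Ioc set_lebesgue_integral_def)
    ultimately show ?thesis
      using fin[of s] unfolding N_def by (simp add: enn2real_plus)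
  qed
  have "((\<lambda>u. LBINT y=(t-1)..u. g y) has_vector_derivative g t) (at t within {t-1..t+1})"
    by (rule interval_integral_FTC2) (auto intro: continuous_on_subset[OF cont])
  then have "((\<lambda>u. enn2real (N (t - 1)) + (LBINT y=(t-1)..u. g y)) has_real_derivative g t) (at t)"
    by (auto simp: at_within_Icc_at has_real_derivative_iff_has_vector_derivative intro: derivative_eq_intros)
  then have "((\<lambda>u. enn2real (N u)) has_real_derivative g t) (at t)"
  proof (rule has_field_derivative_transform_within_open[where S="{t-1<..<t+1}"])
    fix u :: real
    assume "u \<in> {t-1<..<t+1}"
    then show "enn2real (N (t - 1)) + (LBINT y=(t-1)..u. g y) = enn2real (N u)"
      using split[of "t - 1" u] by simp
  qed auto
  then show ?thesis
    unfolding N_def .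
qed

lemma abs_integral_shear_diff_le:
  fixes h h' :: "real \<Rightarrow> real \<Rightarrow> real" and H :: "real \<Rightarrow> real"
  assumes int: "\<And>t c. integrable lborel (\<lambda>u. h (t - c * u) u)"
    and deriv: "\<And>t u. ((\<lambda>s. h s u) has_real_derivative h' t u) (at t)"
    and le: "\<And>t u. \<bar>h' t u\<bar> \<le> H u"
    and H0: "(\<integral>\<^sup>+u. ennreal (H u) \<partial>lborel) \<le> ennreal B"
    and H1: "(\<integral>\<^sup>+u. ennreal (\<bar>u\<bar> * H u) \<partial>lborel) \<le> ennreal B" and "0 \<le> B"
  shows "\<bar>(\<integral>u. h (t - c * u) u \<partial>lborel) - (\<integral>u. h s u \<partial>lborel)\<bar> \<le> B * \<bar>c\<bar> + B * \<bar>t - s\<bar>"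
proof -
  have int0: "integrable lborel (h r)" for r
    using int[of r 0] by simp
  have "\<bar>\<integral>u. h (t - c * u) u - h t u \<partial>lborel\<bar> \<le> \<bar>c\<bar> * B"
  proof (rule abs_integral_le_of_majorant[OF _ _ _ H1 \<open>0 \<le> B\<close>])
    show "(\<lambda>u. h (t - c * u) u - h t u) \<in> borel_measurable lborel"
      using int[of t c] int0[of t] by measurable
    fix u
    have "\<bar>h (t - c * u) u - h t u\<bar> \<le> H u * \<bar>(t - c * u) - t\<bar>"
      by (rule abs_diff_le_of_deriv_bound[OF deriv le])
    also have "\<dots> = \<bar>c\<bar> * (\<bar>u\<bar> * H u)"
      by (simp add: abs_mult)
    finally show "\<bar>h (t - c * u) u - h t u\<bar> \<le> \<bar>c\<bar> * (\<bar>u\<bar> * H u)" .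
  qed simp
  moreover have "\<bar>\<integral>u. h t u - h s u \<partial>lborel\<bar> \<le> \<bar>t - s\<bar> * B"
  proof (rule abs_integral_le_of_majorant[OF _ _ _ H0 \<open>0 \<le> B\<close>])
    show "(\<lambda>u. h t u - h s u) \<in> borel_measurable lborel"
      using int0[of t] int0[of s] by measurable
    show "\<bar>h t u - h s u\<bar> \<le> \<bar>t - s\<bar> * H u" for u
      using abs_diff_le_of_deriv_bound[OF deriv le] by (simp add: mult.commute)
  qed simp
  ultimately show ?thesis
    using int[of t c] int0[of t] int0[of s] by (simp add: abs_le_iff mult.commute)
qed

locale smooth_joint_density =
  fixes P :: "'a measure" and X V :: "'a \<Rightarrow> real"
    and b b1 b2 :: "real \<Rightarrow> real \<Rightarrow> real" and bb0 bb1 bb2 :: "real \<Rightarrow> real"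
  assumes prob_space: "prob_space P"
    and distributed: "distributed P lborel (\<lambda>z. (X z, V z)) (\<lambda>p. ennreal (b (fst p) (snd p)))"
    and nonneg: "\<And>t u. 0 \<le> b t u"
    and deriv1: "\<And>t u. ((\<lambda>s. b s u) has_real_derivative b1 t u) (at t)"
    and deriv2: "\<And>t u. ((\<lambda>s. b1 s u) has_real_derivative b2 t u) (at t)"
    and le0: "\<And>t u. b t u \<le> bb0 u"
    and le1: "\<And>t u. \<bar>b1 t u\<bar> \<le> bb1 u"
    and le2: "\<And>t u. \<bar>b2 t u\<bar> \<le> bb2 u"
    and fin0: "(\<integral>\<^sup>+u. ennreal (bb0 u) \<partial>lborel) < \<infinity>"
    and fin1: "(\<integral>\<^sup>+u. ennreal (bb1 u) \<partial>lborel) < \<infinity>"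
begin

text \<open>The density of \<open>X + c * V\<close> at \<open>t\<close> integrates \<open>b\<close> along the line \<open>s + c * u = t\<close>.\<close>

definition comb_dens :: "real \<Rightarrow> real \<Rightarrow> real" where
  "comb_dens c t = (\<integral>u. b (t - c * u) u \<partial>lborel)"

definition comb_dens_deriv :: "real \<Rightarrow> real \<Rightarrow> real" where
  "comb_dens_deriv c t = (\<integral>u. b1 (t - c * u) u \<partial>lborel)"

lemma borel_measurable_b: "(\<lambda>p. b (fst p) (snd p)) \<in> borel_measurable borel"
proof -
  have "(\<lambda>p. enn2real (ennreal (b (fst p) (snd p)))) \<in> borel_measurable borel"
    using distributed_borel_measurable[OF distributed] by simp
  then show ?thesis
    using nonneg by simp
qed

lemma integrable_b_line: "integrable lborel (\<lambda>u. b (t - c * u) u)"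
  using nonneg le0 fin0
  by (intro integrable_of_nn_integral_majorant borel_measurable_uncurry_comp[OF borel_measurable_b])
     (auto intro: order_trans)

lemma integrable_b1_line: "integrable lborel (\<lambda>u. b1 (t - c * u) u)"
  using le1 fin1
  by (intro integrable_of_nn_integral_majorant
      borel_measurable_uncurry_comp[OF borel_measurable_partial_deriv[OF borel_measurable_b deriv1]])
     auto

lemma has_real_derivative_comb_dens: "(comb_dens c has_real_derivative comb_dens_deriv c t) (at t)"
  unfolding comb_dens_def[abs_def] comb_dens_deriv_def
proof (rule has_real_derivative_integral[where k'="\<lambda>t u. b1 (t - c * u) u" and K=bb1])
  show "((\<lambda>s. b (s - c * u) u) has_real_derivative b1 (t - c * u) u) (at t)" for t u
  proof -
    have "((\<lambda>s. b s u) has_real_derivative b1 (t - c * u) u) (at (t + - c * u))"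
      using deriv1 by simp
    then show ?thesis
      by (subst (asm) DERIV_shift) simp
  qed
qed (rule integrable_b_line le1 fin1)+

lemma emeasure_comb_le:
  "emeasure P {z \<in> space P. X z + c * V z \<le> t} = (\<integral>\<^sup>+y. ennreal (comb_dens c y) * indicator {..t} y \<partial>lborel)"
proof -
  define A where "A = {p :: real \<times> real. fst p + c * snd p \<le> t}"
  have A: "A \<in> sets borel"
    unfolding A_def by (intro borel_closed closed_Collect_le continuous_intros)
  have b: "(\<lambda>p. ennreal (b (fst p) (snd p))) \<in> borel_measurable borel"
    using borel_measurable_b by measurable
  have bA: "(\<lambda>p. ennreal (b (fst p) (snd p)) * indicator A p) \<in> borel_measurable borel"
    using A b by measurable
  have "emeasure P {z \<in> space P. X z + c * V z \<le> t} = emeasure (distr P lborel (\<lambda>z. (X z, V z))) A"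
    using distributed_measurable[OF distributed] A
    by (subst emeasure_distr) (auto simp: A_def intro!: arg_cong2[where f=emeasure])
  also have "\<dots> = (\<integral>\<^sup>+p. ennreal (b (fst p) (snd p)) * indicator A p \<partial>lborel)"
    using A b by (simp add: distributed_distr_eq_density[OF distributed] emeasure_density)
  also have "\<dots> = (\<integral>\<^sup>+y. \<integral>\<^sup>+u. ennreal (b (y - c * u) u) * indicator A (y - c * u, u) \<partial>lborel \<partial>lborel)"
    using nn_integral_lborel_shear[OF bA, of c] by simp
  also have "\<dots> = (\<integral>\<^sup>+y. \<integral>\<^sup>+u. ennreal (b (y - c * u) u) * indicator {..t} y \<partial>lborel \<partial>lborel)"
    by (simp add: A_def indicator_def)
  also have "\<dots> = (\<integral>\<^sup>+y. ennreal (comb_dens c y) * indicator {..t} y \<partial>lborel)"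
  proof (rule nn_integral_cong)
    fix y :: real
    have "(\<integral>\<^sup>+u. ennreal (b (y - c * u) u) \<partial>lborel) = ennreal (comb_dens c y)"
      unfolding comb_dens_def using integrable_b_line nonneg by (intro nn_integral_eq_integral) auto
    then show "(\<integral>\<^sup>+u. ennreal (b (y - c * u) u) * indicator {..t} y \<partial>lborel)
        = ennreal (comb_dens c y) * indicator {..t} y"
      using integrable_b_line by (subst nn_integral_multc) auto
  qed
  finally show ?thesis .
qed

lemma dens_of_comb: "dens_of P (\<lambda>z. X z + c * V z) = comb_dens c"
proof
  fix t
  have cdf: "cdf_of P (\<lambda>z. X z + c * V z) = (\<lambda>t. enn2real (\<integral>\<^sup>+y. ennreal (comb_dens c y) * indicator {..t} y \<partial>lborel))"
    unfolding cdf_of_def measure_def emeasure_comb_le ..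
  have "(cdf_of P (\<lambda>z. X z + c * V z) has_real_derivative comb_dens c t) (at t)"
    unfolding cdf
  proof (rule has_real_derivative_nn_integral_atMost)
    show "continuous_on UNIV (comb_dens c)"
      using has_real_derivative_comb_dens
      by (intro continuous_at_imp_continuous_on ballI DERIV_isCont) blast
    show "0 \<le> comb_dens c y" for y
      unfolding comb_dens_def using nonneg by (intro integral_nonneg_AE) auto
    show "(\<integral>\<^sup>+y. ennreal (comb_dens c y) * indicator {..s} y \<partial>lborel) < \<infinity>" for s
      unfolding emeasure_comb_le[symmetric]
      by (rule le_less_trans[OF prob_space.emeasure_le_1[OF prob_space]]) simp
  qed
  then show "dens_of P (\<lambda>z. X z + c * V z) t = comb_dens c t"
    unfolding dens_of_def by (rule DERIV_imp_deriv)
qed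

lemma dens_deriv_comb: "dens_deriv P (\<lambda>z. X z + c * V z) = comb_dens_deriv c"
  unfolding dens_deriv_def dens_of_comb by (intro ext DERIV_imp_deriv has_real_derivative_comb_dens)

lemma dens_comb_lipschitz:
  assumes I1: "(\<integral>\<^sup>+u. ennreal (bb1 u) \<partial>lborel) \<le> ennreal B"
    and I2: "(\<integral>\<^sup>+u. ennreal (bb2 u) \<partial>lborel) \<le> ennreal B"
    and J1: "(\<integral>\<^sup>+u. ennreal (\<bar>u\<bar> * bb1 u) \<partial>lborel) \<le> ennreal B"
    and J2: "(\<integral>\<^sup>+u. ennreal (\<bar>u\<bar> * bb2 u) \<partial>lborel) \<le> ennreal B" and "0 \<le> B"
  shows "\<bar>dens_of P (\<lambda>z. X z + c * V z) t - dens_of P X s\<bar> \<le> B * \<bar>c\<bar> + B * \<bar>t - s\<bar>"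
    and "\<bar>dens_deriv P (\<lambda>z. X z + c * V z) t - dens_deriv P X s\<bar> \<le> B * \<bar>c\<bar> + B * \<bar>t - s\<bar>"
proof -
  have "dens_of P X = comb_dens 0" "dens_deriv P X = comb_dens_deriv 0"
    using dens_of_comb[of 0] dens_deriv_comb[of 0] by simp_all
  then show "\<bar>dens_of P (\<lambda>z. X z + c * V z) t - dens_of P X s\<bar> \<le> B * \<bar>c\<bar> + B * \<bar>t - s\<bar>"
    and "\<bar>dens_deriv P (\<lambda>z. X z + c * V z) t - dens_deriv P X s\<bar> \<le> B * \<bar>c\<bar> + B * \<bar>t - s\<bar>"
    using abs_integral_shear_diff_le[OF integrable_b_line deriv1 le1 I1 J1 \<open>0 \<le> B\<close>]
      abs_integral_shear_diff_le[OF integrable_b1_line deriv2 le2 I2 J2 \<open>0 \<le> B\<close>]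
    by (simp_all add: dens_of_comb dens_deriv_comb comb_dens_def comb_dens_deriv_def)
qed

end

lemma LIMSEQ_of_abs_diff_le:
  fixes f :: "nat \<Rightarrow> real"
  assumes "\<forall>\<^sub>F m in sequentially. \<bar>f m - L\<bar> \<le> B * a m + B * \<bar>xs m - x\<bar>"
    and "a \<longlonglongrightarrow> 0" and "xs \<longlonglongrightarrow> x"
  shows "f \<longlonglongrightarrow> L"
proof -
  have "(\<lambda>m. B * a m + B * \<bar>xs m - x\<bar>) \<longlonglongrightarrow> B * 0 + B * \<bar>x - x\<bar>"
    by (intro tendsto_intros assms(2,3))
  then have "(\<lambda>m. B * a m + B * \<bar>xs m - x\<bar>) \<longlonglongrightarrow> 0"
    by simp
  with assms(1) have "(\<lambda>m. f m - L) \<longlonglongrightarrow> 0"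
    by (intro Lim_null_comparison[of "\<lambda>m. f m - L"]) simp_all
  then show ?thesis
    by (simp add: LIM_zero_iff)
qed

lemma tendsto_dens_of_perturbation:
  fixes P :: "'a measure" and mu :: "'a \<Rightarrow> real" and mut :: "nat \<Rightarrow> 'a \<Rightarrow> real"
    and a xs :: "nat \<Rightarrow> real" and bb :: "nat \<Rightarrow> nat \<Rightarrow> real \<Rightarrow> real"
  assumes "prob_space P" and a_pos: "\<forall>m. 0 < a m" and "a \<longlonglongrightarrow> 0" and "xs \<longlonglongrightarrow> x"
    and H: "\<forall>m\<ge>m0.
           (\<forall>i\<le>2. \<forall>u. 0 \<le> bb m i u) \<and>
           (\<forall>r::nat\<le>3. \<forall>i\<le>2. (\<integral>\<^sup>+ u. ennreal (\<bar>u\<bar> ^ r * bb m i u) \<partial>lborel) \<le> ennreal B) \<and>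
           (\<exists>b b1 b2 :: real \<Rightarrow> real \<Rightarrow> real.
              distributed P lborel (\<lambda>z. (mu z, (mut m z - mu z) / a m))
                (\<lambda>p. ennreal (b (fst p) (snd p))) \<and>
              (\<forall>t u. 0 \<le> b t u) \<and>
              (\<forall>t u. ((\<lambda>s. b s u) has_real_derivative b1 t u) (at t)) \<and>
              (\<forall>t u. ((\<lambda>s. b1 s u) has_real_derivative b2 t u) (at t)) \<and>
              (\<forall>t u. b t u \<le> bb m 0 u \<and> \<bar>b1 t u\<bar> \<le> bb m 1 u \<and> \<bar>b2 t u\<bar> \<le> bb m 2 u))"
  shows "(\<lambda>m. dens_of P (mut m) (xs m)) \<longlonglongrightarrow> dens_of P mu x \<and>
         (\<lambda>m. dens_deriv P (mut m) (xs m)) \<longlonglongrightarrow> dens_deriv P mu x"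
proof -
  define B' where "B' = max 0 B"
  have bound: "\<bar>dens_of P (mut m) (xs m) - dens_of P mu x\<bar> \<le> B' * a m + B' * \<bar>xs m - x\<bar> \<and>
      \<bar>dens_deriv P (mut m) (xs m) - dens_deriv P mu x\<bar> \<le> B' * a m + B' * \<bar>xs m - x\<bar>"
    if "m0 \<le> m" for m
  proof -
    obtain b b1 b2 :: "real \<Rightarrow> real \<Rightarrow> real" where
      distributed: "distributed P lborel (\<lambda>z. (mu z, (mut m z - mu z) / a m)) (\<lambda>p. ennreal (b (fst p) (snd p)))"
      and nonneg: "\<And>t u. 0 \<le> b t u"
      and deriv1: "\<And>t u. ((\<lambda>s. b s u) has_real_derivative b1 t u) (at t)"
      and deriv2: "\<And>t u. ((\<lambda>s. b1 s u) has_real_derivative b2 t u) (at t)"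
      and le: "\<And>t u. b t u \<le> bb m 0 u \<and> \<bar>b1 t u\<bar> \<le> bb m 1 u \<and> \<bar>b2 t u\<bar> \<le> bb m 2 u"
      using H \<open>m0 \<le> m\<close> by blast
    have moment: "(\<integral>\<^sup>+ u. ennreal (\<bar>u\<bar> ^ r * bb m i u) \<partial>lborel) \<le> ennreal B'" if "r \<le> 3" "i \<le> 2" for r i
      using H \<open>m0 \<le> m\<close> that unfolding B'_def ennreal_max_0 by blast
    have fin: "(\<integral>\<^sup>+ u. ennreal (bb m i u) \<partial>lborel) < \<infinity>" if "i \<le> 2" for i
      using moment[of 0 i] that by (simp add: le_less_trans)
    interpret smooth_joint_density P mu "\<lambda>z. (mut m z - mu z) / a m" b b1 b2 "bb m 0" "bb m 1" "bb m 2"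
    proof (rule smooth_joint_density.intro)
      show "b t u \<le> bb m 0 u" "\<bar>b1 t u\<bar> \<le> bb m 1 u" "\<bar>b2 t u\<bar> \<le> bb m 2 u" for t u
        using le by simp_all
      show "(\<integral>\<^sup>+ u. ennreal (bb m 0 u) \<partial>lborel) < \<infinity>" "(\<integral>\<^sup>+ u. ennreal (bb m 1 u) \<partial>lborel) < \<infinity>"
        using fin[of 0] fin[of 1] by simp_all
    qed (fact assms(1) distributed nonneg deriv1 deriv2)+
    have "0 < a m"
      using a_pos by blast
    then have "mut m = (\<lambda>z. mu z + a m * ((mut m z - mu z) / a m))"
      by (simp add: fun_eq_iff)
    with dens_comb_lipschitz[of B' "a m" "xs m" x] moment[of 0 1] moment[of 0 2] moment[of 1 1] moment[of 1 2]
    show ?thesis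
      using \<open>0 < a m\<close> by (simp add: B'_def)
  qed
  show ?thesis
    using bound by (intro conjI LIMSEQ_of_abs_diff_le[OF _ assms(3,4)]) (auto simp: eventually_sequentially)
qed

theorem lemma1:
  fixes M :: "'w measure" and P :: "'a::euclidean_space measure"
    and mu pi :: "'a \<Rightarrow> real" and mut pit :: "nat \<Rightarrow> 'w \<Rightarrow> 'a \<Rightarrow> real"
    and a :: "nat \<Rightarrow> real" and xs :: "nat \<Rightarrow> real" and x :: real
  assumes "prob_space M" and "prob_space P" and "sets P = sets borel"
    and "mu \<in> borel_measurable P" and "pi \<in> borel_measurable P"
    and "\<forall>m. \<forall>\<omega>\<in>space M. mut m \<omega> \<in> borel_measurable P \<and> pit m \<omega> \<in> borel_measurable P"
    and "\<forall>m. 0 < a m" and "a \<longlonglongrightarrow> 0"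
    and "bigO_P M (\<lambda>m \<omega>. sup_norm P (\<lambda>z. mut m \<omega> z - mu z)) a"
    and "bigO_P M (\<lambda>m \<omega>. sup_norm P (\<lambda>z. pit m \<omega> z - pi z)) a"
    and "AE \<omega> in M. \<exists>m0 (B::real) (bb :: nat \<Rightarrow> nat \<Rightarrow> real \<Rightarrow> real). \<forall>m\<ge>m0.
           (\<forall>i\<le>2. \<forall>u. 0 \<le> bb m i u) \<and>
           (\<forall>r::nat\<le>3. \<forall>i\<le>2. (\<integral>\<^sup>+ u. ennreal (\<bar>u\<bar> ^ r * bb m i u) \<partial>lborel) \<le> ennreal B) \<and>
           (\<exists>b b1 b2 :: real \<Rightarrow> real \<Rightarrow> real.
              distributed P lborel (\<lambda>z. (mu z, (mut m \<omega> z - mu z) / a m))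
                (\<lambda>p. ennreal (b (fst p) (snd p))) \<and>
              (\<forall>t u. 0 \<le> b t u) \<and>
              (\<forall>t u. ((\<lambda>s. b s u) has_real_derivative b1 t u) (at t)) \<and>
              (\<forall>t u. ((\<lambda>s. b1 s u) has_real_derivative b2 t u) (at t)) \<and>
              (\<forall>t u. b t u \<le> bb m 0 u \<and> \<bar>b1 t u\<bar> \<le> bb m 1 u \<and> \<bar>b2 t u\<bar> \<le> bb m 2 u))"
    and "xs \<longlonglongrightarrow> x"
  shows "AE \<omega> in M. (\<lambda>m. dens_of P (mut m \<omega>) (xs m)) \<longlonglongrightarrow> dens_of P mu x \<and>
                     (\<lambda>m. dens_deriv P (mut m \<omega>) (xs m)) \<longlonglongrightarrow> dens_deriv P mu x"
  using assms(11)
  by (rule eventually_mono) (elim exE, erule tendsto_dens_of_perturbation[OF assms(2,7,8,12)])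

end
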